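(* Let $Q$ and $P$ be finite nonzero measures on $\mathbb{R}^n$ with densities $g$ and $f$ respectively with respect to some base measure $\mu$, i.e. $Q(B) = \int_B g(x)\,\mu(dx)$ and $P(B) = \int_B f(x)\,\mu(dx)$. Assume $\mathrm{supp}(f) = \mathrm{supp}(g)$, where $\mathrm{supp}(g) = \{x : g(x) \neq 0\}$, and that there is a constant $M$ with $f(x)/g(x) \le M$ for all $x \in \mathrm{supp}(g)$. Let $R \subseteq \mathbb{R}^+ \times \mathbb{R}^n$ be an exponential race with measure $Q$ and define \[ \mathrm{perturb}(t,x) = \Big(t\,\frac{g(x)}{f(x)},\; x\Big). \] Then $\mathrm{sort}(\mathrm{perturb}(R))$ is an exponential race with measure $P$, where $\mathrm{perturb}(R) = \{\mathrm{perturb}(t,x) : (t,x)\in R\}$ and $\mathrm{sort}$ totally orders points by the first coordinate (time).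
   Context: A random countable subset $\Pi$ of a Euclidean space is a Poisson process with $\sigma$-finite nonatomic mean measure $\nu$ if (1) for every Borel $B$, $\#(\Pi\cap B) \sim \mathrm{Poisson}(\nu(B))$, and (2) for disjoint Borel $A_1,\ldots,A_m$, the counts $\#(\Pi\cap A_j)$ are independent. Let $\lambda$ be Lebesgue measure on $\mathbb{R}^+=(0,\infty)$. For a finite nonzero measure $P$ on $\mathbb{R}^n$, an exponential race with measure $P$ is a random countable subset $R \subseteq \mathbb{R}^+ \times \mathbb{R}^n$ that is a Poisson process with mean measure $\lambda \times P$ and is totally ordered by its first coordinate (time), its points enumerated in increasing order of time. *)

theory Defs
  imports "HOL-Probability.Probability"
begin

definition npts :: "'b set \<Rightarrow> ennreal" where
  "npts S = emeasure (count_space UNIV) S"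

definition poisson_count :: "'w measure \<Rightarrow> ('w \<Rightarrow> ennreal) \<Rightarrow> ennreal \<Rightarrow> bool" where
  "poisson_count M N l \<longleftrightarrow>
     N \<in> borel_measurable M \<and>
     (if l = \<infinity> then (AE \<omega> in M. N \<omega> = \<infinity>)
      else (\<forall>k::nat. measure M {\<omega> \<in> space M. N \<omega> = of_nat k}
                     = exp (- enn2real l) * enn2real l ^ k / fact k))"

definition poisson_process ::
  "'w measure \<Rightarrow> ('w \<Rightarrow> ('b::topological_space) set) \<Rightarrow> 'b measure \<Rightarrow> bool" where
  "poisson_process M R nu \<longleftrightarrow>
     (\<forall>\<omega>\<in>space M. countable (R \<omega>)) \<and>
     (\<forall>B \<in> sets (borel :: 'b measure).
        poisson_count M (\<lambda>\<omega>. npts (R \<omega> \<inter> B)) (emeasure nu B)) \<and>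
     (\<forall>(m::nat) A. (\<forall>j<m. A j \<in> sets (borel :: 'b measure)) \<and> disjoint_family_on A {..<m}
        \<longrightarrow> prob_space.indep_vars M (\<lambda>_. borel) (\<lambda>j \<omega>. npts (R \<omega> \<inter> A j)) {..<m})"

definition lebesgue_pos :: "real measure" where
  "lebesgue_pos = density lborel (indicator {0<..})"

text \<open>Exponential race with measure P: Poisson process on R+ x R^n with mean
  measure lambda x P, totally ordered by time (almost surely).\<close>
definition exp_race ::
  "'w measure \<Rightarrow> ('w \<Rightarrow> (real \<times> 'a::euclidean_space) set) \<Rightarrow> 'a measure \<Rightarrow> bool" where
  "exp_race M R P \<longleftrightarrow>
     poisson_process M R (lebesgue_pos \<Otimes>\<^sub>M P) \<and>
     (AE \<omega> in M. R \<omega> \<subseteq> {0<..} \<times> UNIV \<and>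
                  (\<forall>p\<in>R \<omega>. \<forall>q\<in>R \<omega>. fst p = fst q \<longrightarrow> p = q))"

definition perturb :: "('a \<Rightarrow> real) \<Rightarrow> ('a \<Rightarrow> real) \<Rightarrow> real \<times> 'a \<Rightarrow> real \<times> 'a" where
  "perturb g f = (\<lambda>(t, x). (t * g x / f x, x))"

end

theory Submission
  imports Defs
begin

text \<open>Almost surely every point of the race with measure \<open>Q\<close> lies over the support of \<open>g\<close>,
  where the perturbation is injective. By the mapping theorem the perturbed set is then a Poisson
  process whose mean measure is the image of \<open>\<lambda> \<times> Q\<close>; over a point \<open>x\<close> time is
  stretched by \<open>g x / f x\<close>, so this image has density \<open>g \<cdot> f / g = f\<close>, i.e. it is
  \<open>\<lambda> \<times> P\<close>. Points keep positive times, and a Poisson process with mean measure \<open>\<lambda> \<times> P\<close>,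
  \<open>P\<close> finite, has almost surely no two points at the same time, so it is again totally
  ordered by time.\<close>

lemma npts_image: "inj_on h S \<Longrightarrow> npts (h ` S) = npts S"
  unfolding npts_def by (cases "finite S") (auto simp: card_image finite_image_iff)

lemma npts_eq_0_iff: "npts S = 0 \<longleftrightarrow> S = {}"
  unfolding npts_def by (simp add: emeasure_count_space_eq_0)

lemma min_1_npts: "min 1 (npts S) = (if S = {} then 0 else 1)"
proof (cases "S = {}")
  case False
  then obtain x where "x \<in> S" by auto
  then have "npts {x} \<le> npts S" unfolding npts_def by (intro emeasure_mono) auto
  then show ?thesis using False by (simp add: npts_def min_def)
qed (simp add: npts_def)

lemma npts_doubleton: "p \<noteq> q \<Longrightarrow> npts {p, q} = 2"
  by (simp add: npts_def)

subsection \<open>Counting the projection of a random set\<close>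

lemma countable_separating_open_family:
  obtains b :: "nat \<Rightarrow> 'a::{second_countable_topology, t1_space} set"
  where "\<And>i. open (b i)" and "\<And>x y. x \<noteq> y \<Longrightarrow> \<exists>i. x \<in> b i \<and> y \<notin> b i"
proof -
  obtain BB :: "'a set set" where BB: "countable BB" "topological_basis BB"
    using ex_countable_basis by blast
  have "BB \<noteq> {}" using topological_basisE[OF BB(2), of UNIV undefined] by auto
  define b where "b = from_nat_into BB"
  have "open (b i)" for i
    unfolding b_def using from_nat_into[OF \<open>BB \<noteq> {}\<close>] BB(2) topological_basis_open by blast
  moreover have "\<exists>i. x \<in> b i \<and> y \<notin> b i" if xy: "x \<noteq> y" for x y
  proof -
    have "open (- {y})" by auto
    then obtain V where V: "V \<in> BB" "x \<in> V" "V \<subseteq> - {y}"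
      using topological_basisE[OF BB(2), of "- {y}" x] xy by blast
    moreover obtain i where "V = b i"
      unfolding b_def using range_from_nat_into[OF \<open>BB \<noteq> {}\<close> BB(1)] V(1) by (metis rangeE)
    ultimately show ?thesis by auto
  qed
  ultimately show ?thesis using that by blast
qed

lemma inj_on_signatures_finite:
  fixes b :: "nat \<Rightarrow> 'a set"
  assumes sep: "\<And>x y. x \<noteq> y \<Longrightarrow> \<exists>i. x \<in> b i \<and> y \<notin> b i" and "finite F"
  shows "\<exists>n. inj_on (\<lambda>x. {i. i < n \<and> x \<in> b i}) F"
proof -
  define ix where "ix = (\<lambda>(x, y). SOME i. x \<in> b i \<and> y \<notin> b i)"
  define n where "n = Suc (Max (ix ` (F \<times> F)))"
  have "inj_on (\<lambda>x. {i. i < n \<and> x \<in> b i}) F"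
  proof (rule inj_onI, rule ccontr)
    fix x y assume xy: "x \<in> F" "y \<in> F" "{i. i < n \<and> x \<in> b i} = {i. i < n \<and> y \<in> b i}" "x \<noteq> y"
    have "x \<in> b (ix (x, y)) \<and> y \<notin> b (ix (x, y))"
      unfolding ix_def using someI_ex[OF sep[OF xy(4)]] by simp
    moreover have "ix (x, y) < n"
      using \<open>finite F\<close> xy(1,2) unfolding n_def by (simp add: le_imp_less_Suc)
    ultimately show False using xy(3) by blast
  qed
  then show ?thesis by blast
qed

lemma npts_eq_SUP_card_signatures:
  fixes b :: "nat \<Rightarrow> 'a set"
  assumes sep: "\<And>x y. x \<noteq> y \<Longrightarrow> \<exists>i. x \<in> b i \<and> y \<notin> b i"
  shows "npts Y = (SUP n. of_nat (card ((\<lambda>x. {i. i < n \<and> x \<in> b i}) ` Y)))"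
proof -
  let ?s = "\<lambda>n x. {i. i < n \<and> x \<in> b i}"
  have fin: "finite (?s n ` Y)" for n
    by (rule finite_subset[of _ "Pow {..<n}"]) auto
  have ge: "\<exists>n. card F \<le> card (?s n ` Y)" if "finite F" "F \<subseteq> Y" for F
  proof -
    obtain n where "inj_on (?s n) F" using inj_on_signatures_finite[OF sep \<open>finite F\<close>] by blast
    then have "card F = card (?s n ` F)" by (simp add: card_image)
    also have "\<dots> \<le> card (?s n ` Y)" using fin that by (intro card_mono image_mono) auto
    finally show ?thesis by blast
  qed
  show ?thesis
  proof (rule antisym)
    show "(SUP n. of_nat (card (?s n ` Y))) \<le> npts Y"
      by (rule SUP_least, cases "finite Y") (auto simp: npts_def card_image_le)
  next
    show "npts Y \<le> (SUP n. of_nat (card (?s n ` Y)))"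
    proof (cases "finite Y")
      case True
      then obtain n where "card Y \<le> card (?s n ` Y)" using ge[of Y] by blast
      then have "npts Y \<le> of_nat (card (?s n ` Y))" using True by (simp add: npts_def)
      also have "\<dots> \<le> (SUP n. of_nat (card (?s n ` Y)))" by (rule SUP_upper) simp
      finally show ?thesis .
    next
      case False
      have "(SUP n. of_nat (card (?s n ` Y)) :: ennreal) = top"
      proof (rule ennreal_SUP_eq_top)
        fix k :: nat
        obtain F where "finite F" "card F = k" "F \<subseteq> Y"
          using infinite_arbitrarily_large[OF False] by blast
        then show "\<exists>n\<in>UNIV. of_nat k \<le> (of_nat (card (?s n ` Y)) :: ennreal)"
          using ge by fastforce
      qed
      then show ?thesis by (metis top_greatest)
    qed
  qed
qed

text \<open>The number of distinct second coordinates is the supremum over n of the number of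
  cells, of the partition generated by the first n members of a separating family, that the
  projection hits; each such number is a finite sum of indicators of events
  \<open>R \<omega> \<inter> (UNIV \<times> A) \<noteq> {}\<close>.\<close>
lemma borel_measurable_npts_snd_image:
  fixes R :: "'w \<Rightarrow> ('c::topological_space \<times> 'a::{second_countable_topology, t1_space}) set"
  assumes meas: "\<And>B. B \<in> sets borel \<Longrightarrow> (\<lambda>\<omega>. npts (R \<omega> \<inter> B)) \<in> borel_measurable M"
    and Z: "Z \<in> sets borel"
  shows "(\<lambda>\<omega>. npts (snd ` (R \<omega> \<inter> (UNIV \<times> Z)))) \<in> borel_measurable M"
proof -
  obtain b :: "nat \<Rightarrow> 'a set" where b_open: "\<And>i. open (b i)"
    and sep: "\<And>x y. x \<noteq> y \<Longrightarrow> \<exists>i. x \<in> b i \<and> y \<notin> b i"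
    by (metis countable_separating_open_family)
  have [measurable]: "b i \<in> sets borel" for i using b_open by simp
  let ?s = "\<lambda>n x. {i. i < n \<and> x \<in> b i}"
  have cell_borel: "{x. ?s n x = T} \<in> sets borel" if "T \<subseteq> {..<n}" for n T
  proof -
    have "{x. ?s n x = T} = {x \<in> space borel. \<forall>i\<in>{..<n}. x \<in> b i \<longleftrightarrow> i \<in> T}"
      using that by auto
    also have "\<dots> \<in> sets borel" by measurable
    finally show ?thesis .
  qed
  define h where
    "h n \<omega> = (\<Sum>T\<in>Pow {..<n}. min 1 (npts (R \<omega> \<inter> (UNIV \<times> (Z \<inter> {x. ?s n x = T})))))" for n \<omega>
  have h_measurable: "h n \<in> borel_measurable M" for n
    unfolding h_def
    by (intro borel_measurable_sum borel_measurable_min borel_measurable_const meas)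
       (use cell_borel Z in \<open>auto intro!: borel_Times\<close>)
  have h_eq: "h n \<omega> = of_nat (card (?s n ` snd ` (R \<omega> \<inter> (UNIV \<times> Z))))" for n \<omega>
  proof -
    have "h n \<omega> = of_nat (card {T\<in>Pow {..<n}. R \<omega> \<inter> (UNIV \<times> (Z \<inter> {x. ?s n x = T})) \<noteq> {}})"
      unfolding h_def min_1_npts by (simp add: sum.If_cases Int_def)
    also have "{T\<in>Pow {..<n}. R \<omega> \<inter> (UNIV \<times> (Z \<inter> {x. ?s n x = T})) \<noteq> {}}
        = ?s n ` snd ` (R \<omega> \<inter> (UNIV \<times> Z))"
      by (auto simp: image_iff) force+
    finally show ?thesis .
  qed
  have "(\<lambda>\<omega>. npts (snd ` (R \<omega> \<inter> (UNIV \<times> Z)))) = (\<lambda>\<omega>. SUP n. h n \<omega>)"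
    by (simp add: h_eq npts_eq_SUP_card_signatures[OF sep])
  also have "\<dots> \<in> borel_measurable M" using h_measurable by measurable
  finally show ?thesis .
qed

subsection \<open>Poisson processes\<close>

lemma
  assumes "poisson_process M R \<nu>"
  shows poisson_process_countable: "\<omega> \<in> space M \<Longrightarrow> countable (R \<omega>)"
    and poisson_process_count:
      "B \<in> sets borel \<Longrightarrow> poisson_count M (\<lambda>\<omega>. npts (R \<omega> \<inter> B)) (emeasure \<nu> B)"
  using assms unfolding poisson_process_def by simp_all

lemma poisson_process_indep:
  fixes m :: nat
  assumes "poisson_process M R \<nu>"
    and "\<And>j. j < m \<Longrightarrow> A j \<in> sets borel" and "disjoint_family_on A {..<m}"
  shows "prob_space.indep_vars M (\<lambda>_. borel) (\<lambda>j \<omega>. npts (R \<omega> \<inter> A j)) {..<m}"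
  using assms(1)[unfolded poisson_process_def, THEN conjunct2, THEN conjunct2, rule_format, of m A]
    assms(2,3) by blast

lemma poisson_process_count_measurable:
  "poisson_process M R \<nu> \<Longrightarrow> B \<in> sets borel \<Longrightarrow> (\<lambda>\<omega>. npts (R \<omega> \<inter> B)) \<in> borel_measurable M"
  using poisson_process_count unfolding poisson_count_def by blast

lemma (in prob_space) indep_vars_AE_cong:
  assumes indep: "indep_vars (\<lambda>_. borel) X I"
    and Y_measurable: "\<And>i. i \<in> I \<Longrightarrow> Y i \<in> borel_measurable M"
    and X_Y: "\<And>i. i \<in> I \<Longrightarrow> AE \<omega> in M. X i \<omega> = Y i \<omega>"
    and "finite I"
  shows "indep_vars (\<lambda>_. (borel :: 'b::topological_space measure)) Y I"
proof (cases "I = {}")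
  case True
  then show ?thesis by (simp add: indep_vars_def indep_sets_def)
next
  case False
  have X_measurable: "\<And>i. i \<in> I \<Longrightarrow> X i \<in> borel_measurable M"
    using indep unfolding indep_vars_def by auto
  have joint: "distr M (\<Pi>\<^sub>M i\<in>I. borel) (\<lambda>x. \<lambda>i\<in>I. Y i x)
      = distr M (\<Pi>\<^sub>M i\<in>I. borel) (\<lambda>x. \<lambda>i\<in>I. X i x)"
  proof (rule distr_cong_AE)
    have "AE x in M. \<forall>i\<in>I. X i x = Y i x" using \<open>finite I\<close> X_Y by (rule AE_finite_allI)
    then show "AE x in M. (\<lambda>i\<in>I. Y i x) = (\<lambda>i\<in>I. X i x)"
      by eventually_elim (auto simp: fun_eq_iff)
  qed (auto intro!: measurable_restrict X_measurable Y_measurable)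
  have marginal: "distr M borel (Y i) = distr M borel (X i)" if "i \<in> I" for i
    by (rule distr_cong_AE) (use X_Y[OF that] X_measurable[OF that] Y_measurable[OF that] in auto)
  have "distr M (\<Pi>\<^sub>M i\<in>I. borel) (\<lambda>x. \<lambda>i\<in>I. X i x) = (\<Pi>\<^sub>M i\<in>I. distr M borel (X i))"
    using indep indep_vars_iff_distr_eq_PiM'[OF False, where M'="\<lambda>_. borel" and X=X] X_measurable
    by simp
  then have "distr M (\<Pi>\<^sub>M i\<in>I. borel) (\<lambda>x. \<lambda>i\<in>I. Y i x) = (\<Pi>\<^sub>M i\<in>I. distr M borel (Y i))"
    using joint marginal by (simp cong: PiM_cong)
  then show ?thesis
    using indep_vars_iff_distr_eq_PiM'[OF False, where M'="\<lambda>_. borel" and X=Y] Y_measurable by simp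
qed

lemma poisson_count_AE_cong:
  assumes "poisson_count M N l" and "N' \<in> borel_measurable M" and "AE \<omega> in M. N \<omega> = N' \<omega>"
  shows "poisson_count M N' l"
proof -
  have [measurable]: "N \<in> borel_measurable M" "N' \<in> borel_measurable M"
    using assms(1,2) unfolding poisson_count_def by simp_all
  have "measure M {\<omega> \<in> space M. N' \<omega> = of_nat k} = measure M {\<omega> \<in> space M. N \<omega> = of_nat k}" for k
    by (rule measure_eq_AE) (use assms(3) in auto)
  moreover have "(AE \<omega> in M. N \<omega> = \<infinity>) \<longleftrightarrow> (AE \<omega> in M. N' \<omega> = \<infinity>)"
    using assms(3) by (auto elim: AE_mp)
  ultimately show ?thesis using assms(1,2) unfolding poisson_count_def
    by (cases "l = \<infinity>") (simp_all only: if_True if_False simp_thms)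
qed

lemma (in prob_space) poisson_count_prob_ge_2:
  assumes "poisson_count M N (ennreal a)" and "a \<ge> 0"
  shows "prob {\<omega> \<in> space M. N \<omega> \<notin> {0, 1}} \<le> a\<^sup>2"
proof -
  have [measurable]: "N \<in> borel_measurable M" using assms(1) unfolding poisson_count_def by simp
  let ?A = "{\<omega> \<in> space M. N \<omega> = 0}" and ?B = "{\<omega> \<in> space M. N \<omega> = 1}"
    and ?C = "{\<omega> \<in> space M. N \<omega> \<notin> {0, 1}}"
  have "prob ?A = exp (- a)" and "prob ?B = exp (- a) * a"
    using assms unfolding poisson_count_def by (auto dest: spec[of _ 0] spec[of _ 1])
  moreover have "prob ?A + prob ?B + prob ?C = 1"
  proof -
    have "?A \<union> ?B \<union> ?C = space M" by auto
    then have "prob (?A \<union> ?B \<union> ?C) = 1" by (simp add: prob_space)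
    then show ?thesis by (subst (asm) finite_measure_Union finite_measure_Union; auto)+
  qed
  moreover have "exp (- a) * (1 + a) \<ge> (1 - a) * (1 + a)"
    using exp_ge_add_one_self[of "- a"] \<open>a \<ge> 0\<close> by (intro mult_right_mono) auto
  ultimately show ?thesis by (simp add: algebra_simps power2_eq_square)
qed

lemma poisson_process_image:
  fixes R :: "'w \<Rightarrow> 'b::topological_space set" and h :: "'b \<Rightarrow> 'c::topological_space"
  assumes "prob_space M" and R: "poisson_process M R \<nu>"
    and h: "h \<in> borel_measurable borel" and S: "S \<in> sets borel" and "inj_on h S"
    and R_S: "AE \<omega> in M. R \<omega> \<subseteq> S"
    and counts_measurable: "\<And>B. B \<in> sets borel \<Longrightarrow> (\<lambda>\<omega>. npts (h ` R \<omega> \<inter> B)) \<in> borel_measurable M"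
    and mean: "\<And>B. B \<in> sets borel \<Longrightarrow> emeasure \<nu> (h -` B \<inter> S) = emeasure \<nu>' B"
  shows "poisson_process M (\<lambda>\<omega>. h ` R \<omega>) \<nu>'"
proof -
  interpret prob_space M by fact
  have vimage_borel: "h -` B \<inter> S \<in> sets borel" if "B \<in> sets borel" for B
    using measurable_sets[OF h that] S by auto
  have counts_AE: "AE \<omega> in M. npts (R \<omega> \<inter> (h -` B \<inter> S)) = npts (h ` R \<omega> \<inter> B)" for B
    using R_S
  proof eventually_elim
    case (elim \<omega>)
    then have image_eq: "h ` R \<omega> \<inter> B = h ` (R \<omega> \<inter> (h -` B \<inter> S))" by auto
    have "inj_on h (R \<omega> \<inter> (h -` B \<inter> S))"
      using \<open>inj_on h S\<close> by (rule inj_on_subset) auto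
    then show ?case unfolding image_eq by (rule npts_image[symmetric])
  qed
  show ?thesis unfolding poisson_process_def
  proof (intro conjI ballI allI impI)
    fix \<omega> assume "\<omega> \<in> space M"
    then show "countable (h ` R \<omega>)" using poisson_process_countable[OF R] by blast
  next
    fix B :: "'c set" assume B: "B \<in> sets borel"
    then have "poisson_count M (\<lambda>\<omega>. npts (R \<omega> \<inter> (h -` B \<inter> S))) (emeasure \<nu> (h -` B \<inter> S))"
      by (intro poisson_process_count[OF R] vimage_borel)
    then show "poisson_count M (\<lambda>\<omega>. npts (h ` R \<omega> \<inter> B)) (emeasure \<nu>' B)"
      unfolding mean[OF B] using counts_measurable[OF B] counts_AE by (rule poisson_count_AE_cong)
  next
    fix m :: nat and A :: "nat \<Rightarrow> 'c set"
    assume A: "(\<forall>j<m. A j \<in> sets borel) \<and> disjoint_family_on A {..<m}"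
    then have "disjoint_family_on (\<lambda>j. h -` A j \<inter> S) {..<m}"
      unfolding disjoint_family_on_def by blast
    then have "indep_vars (\<lambda>_. borel) (\<lambda>j \<omega>. npts (R \<omega> \<inter> (h -` A j \<inter> S))) {..<m}"
      using A vimage_borel by (intro poisson_process_indep[OF R]) auto
    then show "indep_vars (\<lambda>_. borel) (\<lambda>j \<omega>. npts (h ` R \<omega> \<inter> A j)) {..<m}"
      by (rule indep_vars_AE_cong) (use A counts_measurable counts_AE in auto)
  qed
qed

lemma AE_poisson_process_disjoint_null:
  assumes "prob_space M" and "poisson_process M R \<nu>"
    and "Z \<in> sets borel" and "emeasure \<nu> Z = 0"
  shows "AE \<omega> in M. R \<omega> \<inter> Z = {}"
proof -
  interpret prob_space M by fact
  have "poisson_count M (\<lambda>\<omega>. npts (R \<omega> \<inter> Z)) 0"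
    using poisson_process_count[OF assms(2,3)] assms(4) by simp
  then have "prob {\<omega> \<in> space M. npts (R \<omega> \<inter> Z) = 0} = 1"
    unfolding poisson_count_def by (auto dest: spec[of _ 0])
  then have "AE \<omega> in M. \<omega> \<in> {\<omega> \<in> space M. npts (R \<omega> \<inter> Z) = 0}" by (rule AE_prob_1)
  then show ?thesis by eventually_elim (simp add: npts_eq_0_iff)
qed

lemma sets_lebesgue_pos[simp, measurable_cong]: "sets lebesgue_pos = sets borel"
  by (simp add: lebesgue_pos_def)

lemma sigma_finite_lebesgue_pos: "sigma_finite_measure lebesgue_pos"
  unfolding lebesgue_pos_def
  by (subst sigma_finite_measure.sigma_finite_iff_density_finite[OF sigma_finite_lborel])
     (auto simp: indicator_def)

lemma emeasure_lebesgue_pos: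
  assumes "S \<in> sets borel"
  shows "emeasure lebesgue_pos S = emeasure lborel (S \<inter> {0<..})"
proof -
  have "indicator {0<..} x * indicator S x = (indicator (S \<inter> {0<..}) x :: ennreal)" for x :: real
    by (auto split: split_indicator)
  then show ?thesis
    unfolding lebesgue_pos_def using assms by (subst emeasure_density) auto
qed

lemma emeasure_lebesgue_pos_Ioc:
  assumes "0 \<le> a" "a \<le> b"
  shows "emeasure lebesgue_pos {a<..b} = ennreal (b - a)"
proof -
  have "{a<..b} \<inter> {0<..} = {a<..b}" using assms by auto
  then show ?thesis using assms by (simp add: emeasure_lebesgue_pos)
qed

lemma emeasure_lebesgue_pos_vimage_scale:
  fixes r :: real
  assumes "r > 0" and S: "S \<in> sets borel"
  shows "emeasure lebesgue_pos ((\<lambda>t. r * t) -` S) = ennreal (inverse r) * emeasure lebesgue_pos S"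
proof -
  have "(\<lambda>t. r * t) \<in> borel_measurable borel" by measurable
  from measurable_sets[OF this S] have "(\<lambda>t. r * t) -` S \<in> sets borel" by simp
  moreover have "(\<lambda>t. r * t) -` S \<inter> {0<..} = (\<lambda>t. r * t) -` (S \<inter> {0<..}) \<inter> space lborel"
    using \<open>r > 0\<close> by (auto simp: zero_less_mult_iff)
  ultimately have "emeasure lebesgue_pos ((\<lambda>t. r * t) -` S)
      = emeasure (distr lborel borel ((*) r)) (S \<inter> {0<..})"
    using S by (subst emeasure_distr) (auto simp: emeasure_lebesgue_pos)
  also have "\<dots> = ennreal (inverse r) * emeasure lborel (S \<inter> {0<..})"
    using \<open>r > 0\<close> S by (simp add: lborel_distr_mult emeasure_density_const)
  finally show ?thesis using S by (simp add: emeasure_lebesgue_pos)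
qed

subsection \<open>Distinct times\<close>

lemma poisson_process_prob_slab_ge_2:
  fixes R :: "'w \<Rightarrow> (real \<times> 'a::topological_space) set"
  assumes "prob_space M" and R: "poisson_process M R (lebesgue_pos \<Otimes>\<^sub>M P)"
    and sets_P: "sets P = sets borel" and P_UNIV: "emeasure P UNIV = ennreal c" and "0 \<le> c"
    and "0 \<le> a" "a \<le> b"
  shows "measure M {\<omega> \<in> space M. npts (R \<omega> \<inter> {a<..b} \<times> UNIV) \<notin> {0, 1}} \<le> ((b - a) * c)\<^sup>2"
proof -
  have "space P = UNIV" using sets_eq_imp_space_eq[OF sets_P] by simp
  then interpret P: finite_measure P using P_UNIV by (intro finite_measureI) simp
  have "emeasure (lebesgue_pos \<Otimes>\<^sub>M P) ({a<..b} \<times> UNIV) = ennreal ((b - a) * c)"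
    using assms(6,7) \<open>0 \<le> c\<close>
    by (subst P.emeasure_pair_measure_Times)
       (auto simp: sets_P P_UNIV emeasure_lebesgue_pos_Ioc ennreal_mult)
  moreover have "{a<..b} \<times> (UNIV :: 'a set) \<in> sets borel" by (intro borel_Times) auto
  ultimately have "poisson_count M (\<lambda>\<omega>. npts (R \<omega> \<inter> {a<..b} \<times> UNIV)) (ennreal ((b - a) * c))"
    using poisson_process_count[OF R] by metis
  then show ?thesis
    using \<open>0 \<le> c\<close> assms(6,7)
    by (intro prob_space.poisson_count_prob_ge_2[OF \<open>prob_space M\<close>]) auto
qed

lemma grid_cell_exists:
  fixes s T :: real and n :: nat
  assumes "0 < s" "s \<le> T" "n > 0"
  shows "\<exists>k<n. T * k / n < s \<and> s \<le> T * (real k + 1) / n"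
proof -
  have T: "T > 0" using assms by simp
  define m where "m = \<lceil>s * n / T\<rceil>"
  have "m \<ge> 1" unfolding m_def using assms T by (simp add: one_le_ceiling)
  moreover have "m \<le> int n"
    unfolding m_def using assms T by (simp add: ceiling_le_iff field_simps mult_right_mono)
  moreover have "m - 1 < s * n / T" "s * n / T \<le> m"
    unfolding m_def by linarith+
  ultimately show ?thesis
    using T \<open>n > 0\<close> by (intro exI[of _ "nat m - 1"]) (auto simp: of_nat_diff field_simps)
qed

lemma poisson_process_prob_grid_ge_2:
  fixes R :: "'w \<Rightarrow> (real \<times> 'a::topological_space) set" and T :: real and n :: nat
  assumes "prob_space M" and R: "poisson_process M R (lebesgue_pos \<Otimes>\<^sub>M P)"
    and sets_P: "sets P = sets borel" and c: "emeasure P UNIV = ennreal c" "0 \<le> c"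
    and "0 \<le> T" and "n > 0"
  shows "measure M (\<Union>k<n. {\<omega> \<in> space M.
      npts (R \<omega> \<inter> {T * k / n <.. T * (real k + 1) / n} \<times> UNIV) \<notin> {0, 1}})
    \<le> (T * c)\<^sup>2 * inverse n"
proof -
  interpret prob_space M by fact
  let ?slab = "\<lambda>k::nat. {T * k / n <.. T * (real k + 1) / n} \<times> (UNIV :: 'a set)"
  have "prob (\<Union>k<n. {\<omega> \<in> space M. npts (R \<omega> \<inter> ?slab k) \<notin> {0, 1}})
      \<le> (\<Sum>k<n. prob {\<omega> \<in> space M. npts (R \<omega> \<inter> ?slab k) \<notin> {0, 1}})"
  proof (intro finite_measure_subadditive_finite)
    have [measurable]: "(\<lambda>\<omega>. npts (R \<omega> \<inter> ?slab k)) \<in> borel_measurable M" for k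
      by (intro poisson_process_count_measurable[OF R] borel_Times) auto
    have "{\<omega> \<in> space M. npts (R \<omega> \<inter> ?slab k) \<notin> {0, 1}} \<in> events" for k
      by measurable
    then show "(\<lambda>k. {\<omega> \<in> space M. npts (R \<omega> \<inter> ?slab k) \<notin> {0, 1}}) ` {..<n} \<subseteq> events"
      by auto
  qed simp
  also have "\<dots> \<le> (\<Sum>k<n. (T / n * c)\<^sup>2)"
  proof (rule sum_mono)
    fix k :: nat
    have "T * k / n \<le> T * (real k + 1) / n"
      using \<open>0 \<le> T\<close> by (intro divide_right_mono mult_left_mono) auto
    moreover have "T * (real k + 1) / n - T * k / n = T / n"
      by (simp add: diff_divide_distrib[symmetric] algebra_simps)
    ultimately show "prob {\<omega> \<in> space M. npts (R \<omega> \<inter> ?slab k) \<notin> {0, 1}} \<le> (T / n * c)\<^sup>2"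
      using poisson_process_prob_slab_ge_2[OF \<open>prob_space M\<close> R sets_P c,
          of "T * k / n" "T * (real k + 1) / n"] \<open>0 \<le> T\<close>
      by simp
  qed
  also have "\<dots> = (T * c)\<^sup>2 * inverse n"
    using \<open>n > 0\<close> by (simp add: power2_eq_square field_simps)
  finally show ?thesis .
qed

text \<open>Two points with a common time in \<open>(0, T]\<close> put at least two points into one of the
  \<open>n\<close> slabs of width \<open>T / n\<close>, an event of probability at most \<open>(T c)\<^sup>2 / n\<close>.\<close>
lemma poisson_process_AE_distinct_times_upto:
  fixes R :: "'w \<Rightarrow> (real \<times> 'a::topological_space) set"
  assumes "prob_space M" and R: "poisson_process M R (lebesgue_pos \<Otimes>\<^sub>M P)"
    and sets_P: "sets P = sets borel" and "emeasure P UNIV < \<infinity>" and "0 \<le> T"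
  shows "AE \<omega> in M. \<forall>p\<in>R \<omega>. \<forall>q\<in>R \<omega>. fst p = fst q \<longrightarrow> fst p \<in> {0<..T} \<longrightarrow> p = q"
proof -
  interpret prob_space M by fact
  obtain c where c: "emeasure P UNIV = ennreal c" "0 \<le> c"
    using \<open>emeasure P UNIV < \<infinity>\<close> by (cases "emeasure P UNIV") auto
  define slab where "slab n k = {T * k / n <.. T * (real k + 1) / n} \<times> (UNIV :: 'a set)" for n k :: nat
  define E where "E n = (\<Union>k<n. {\<omega> \<in> space M. npts (R \<omega> \<inter> slab n k) \<notin> {0, 1}})" for n
  have [measurable]: "(\<lambda>\<omega>. npts (R \<omega> \<inter> slab n k)) \<in> borel_measurable M" for n k
    unfolding slab_def by (intro poisson_process_count_measurable[OF R] borel_Times) auto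
  have E_events: "E n \<in> events" for n unfolding E_def by measurable
  have "prob (\<Inter>n. E (Suc n)) \<le> 0"
  proof (rule LIMSEQ_le_const)
    show "(\<lambda>n. (T * c)\<^sup>2 * inverse (real (Suc n))) \<longlonglongrightarrow> 0"
      by (rule tendsto_mult_right_zero[OF LIMSEQ_inverse_real_of_nat])
    have "prob (\<Inter>n. E (Suc n)) \<le> prob (E (Suc n))" for n
      by (rule finite_measure_mono) (auto simp: E_events)
    also have "prob (E (Suc n)) \<le> (T * c)\<^sup>2 * inverse (real (Suc n))" for n
      unfolding E_def slab_def
      by (rule poisson_process_prob_grid_ge_2[OF \<open>prob_space M\<close> R sets_P c \<open>0 \<le> T\<close>]) simp
    finally show "\<exists>N. \<forall>n\<ge>N. prob (\<Inter>n. E (Suc n)) \<le> (T * c)\<^sup>2 * inverse (real (Suc n))" by blast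
  qed
  then have "(\<Inter>n. E (Suc n)) \<in> null_sets M"
    using E_events measure_nonneg[of M "\<Inter>n. E (Suc n)"]
    by (auto simp: emeasure_eq_measure null_sets_def)
  from AE_not_in[OF this] AE_space show ?thesis
  proof eventually_elim
    case (elim \<omega>)
    show ?case
    proof (intro ballI impI, rule ccontr)
      fix p q assume pq: "p \<in> R \<omega>" "q \<in> R \<omega>" "fst p = fst q" "fst p \<in> {0<..T}" "p \<noteq> q"
      have "\<omega> \<in> E (Suc n)" for n
      proof -
        obtain k where k: "k < Suc n" "fst p \<in> {T * k / Suc n <.. T * (real k + 1) / Suc n}"
          using grid_cell_exists[of "fst p" T "Suc n"] pq(4) by auto
        have "npts {p, q} \<le> npts (R \<omega> \<inter> slab (Suc n) k)"
          unfolding npts_def using pq k(2) by (intro emeasure_mono) (auto simp: slab_def mem_Times_iff)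
        then have "npts (R \<omega> \<inter> slab (Suc n) k) \<notin> {0, 1}"
          using npts_doubleton[OF pq(5)] by (auto simp: one_less_numeral_iff)
        then show ?thesis unfolding E_def using k(1) elim(2) by auto
      qed
      then show False using elim(1) by auto
    qed
  qed
qed

lemma poisson_process_AE_distinct_times:
  fixes R :: "'w \<Rightarrow> (real \<times> 'a::topological_space) set"
  assumes "prob_space M" and R: "poisson_process M R (lebesgue_pos \<Otimes>\<^sub>M P)"
    and "sets P = sets borel" and "emeasure P UNIV < \<infinity>"
    and positive: "AE \<omega> in M. R \<omega> \<subseteq> {0<..} \<times> UNIV"
  shows "AE \<omega> in M. \<forall>p\<in>R \<omega>. \<forall>q\<in>R \<omega>. fst p = fst q \<longrightarrow> p = q"
proof -
  have "AE \<omega> in M. \<forall>T::nat. \<forall>p\<in>R \<omega>. \<forall>q\<in>R \<omega>.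
      fst p = fst q \<longrightarrow> fst p \<in> {0<..real T} \<longrightarrow> p = q"
    using poisson_process_AE_distinct_times_upto[OF assms(1-4)] by (simp add: AE_all_countable)
  then show ?thesis using positive
  proof eventually_elim
    case (elim \<omega>)
    show ?case
    proof (intro ballI impI)
      fix p q assume "p \<in> R \<omega>" "q \<in> R \<omega>" "fst p = fst q"
      moreover obtain T :: nat where "fst p \<le> T" using real_arch_simple by blast
      ultimately show "p = q" using elim by (auto simp: mem_Times_iff)
    qed
  qed
qed

subsection \<open>Perturbing an exponential race\<close>

lemma fst_borel_measurable[measurable]:
  "fst \<in> borel_measurable (borel :: ('a::topological_space \<times> 'b::topological_space) measure)"
  by (intro borel_measurable_continuous_onI continuous_on_fst continuous_on_id)

lemma snd_borel_measurable[measurable]: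
  "snd \<in> borel_measurable (borel :: ('a::topological_space \<times> 'b::topological_space) measure)"
  by (intro borel_measurable_continuous_onI continuous_on_snd continuous_on_id)

locale race_perturbation =
  fixes \<mu> :: "'a::euclidean_space measure" and f g :: "'a \<Rightarrow> real"
  assumes sets_\<mu>: "sets \<mu> = sets borel"
    and f_measurable: "f \<in> borel_measurable \<mu>" and g_measurable: "g \<in> borel_measurable \<mu>"
    and f_nonneg: "\<And>x. 0 \<le> f x" and g_nonneg: "\<And>x. 0 \<le> g x"
    and finite_P: "emeasure (density \<mu> (\<lambda>x. ennreal (f x))) UNIV < \<infinity>"
    and finite_Q: "emeasure (density \<mu> (\<lambda>x. ennreal (g x))) UNIV < \<infinity>"
    and same_support: "{x. f x \<noteq> 0} = {x. g x \<noteq> 0}"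
begin

abbreviation P :: "'a measure" where "P \<equiv> density \<mu> (\<lambda>x. ennreal (f x))"
abbreviation Q :: "'a measure" where "Q \<equiv> density \<mu> (\<lambda>x. ennreal (g x))"

lemma f_borel[measurable]: "f \<in> borel_measurable borel"
  using f_measurable by (simp add: measurable_cong_sets[OF sets_\<mu> refl])

lemma g_borel[measurable]: "g \<in> borel_measurable borel"
  using g_measurable by (simp add: measurable_cong_sets[OF sets_\<mu> refl])

lemma perturb_borel[measurable]: "perturb g f \<in> borel_measurable borel"
  unfolding perturb_def by measurable

lemma sets_P: "sets P = sets borel"
  by (simp add: sets_\<mu>)

lemma pair_sigma_finite_P: "pair_sigma_finite lebesgue_pos P"
  and pair_sigma_finite_Q: "pair_sigma_finite lebesgue_pos Q"
  using finite_P finite_Q sets_eq_imp_space_eq[OF sets_\<mu>]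
  by (auto intro!: pair_sigma_finite.intro sigma_finite_lebesgue_pos finite_measure.axioms(1)
      finite_measureI)

lemma sets_pair_P: "sets (lebesgue_pos \<Otimes>\<^sub>M P) = sets (borel :: (real \<times> 'a) measure)"
  and sets_pair_Q: "sets (lebesgue_pos \<Otimes>\<^sub>M Q) = sets (borel :: (real \<times> 'a) measure)"
  by (simp_all add: sets_\<mu> borel_prod[symmetric] cong: sets_pair_measure_cong)

lemma support_borel: "UNIV \<times> {x. g x \<noteq> 0} \<in> sets borel"
  by (intro borel_Times) measurable

lemma vimage_perturb_borel:
  "B \<in> sets borel \<Longrightarrow> perturb g f -` B \<inter> UNIV \<times> {x. g x \<noteq> 0} \<in> sets borel"
  using measurable_sets_borel[OF perturb_borel] support_borel by auto

lemma emeasure_Q_zeros: "emeasure Q {x. g x = 0} = 0"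
proof -
  have "emeasure Q {x. g x = 0} = (\<integral>\<^sup>+x. ennreal (g x) * indicator {x. g x = 0} x \<partial>\<mu>)"
    using g_measurable sets_\<mu> by (subst emeasure_density) auto
  also have "\<dots> = (\<integral>\<^sup>+x. 0 \<partial>\<mu>)" by (intro nn_integral_cong) (auto split: split_indicator)
  finally show ?thesis by simp
qed

lemma inj_on_perturb: "inj_on (perturb g f) (UNIV \<times> {x. g x \<noteq> 0})"
proof (rule inj_onI)
  fix p q assume "p \<in> UNIV \<times> {x. g x \<noteq> 0}" "q \<in> UNIV \<times> {x. g x \<noteq> 0}"
    and "perturb g f p = perturb g f q"
  moreover obtain t x s y where "p = (t, x)" "q = (s, y)" by fastforce
  ultimately have "x = y" "g x \<noteq> 0" "t * g x / f x = s * g x / f x"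
    by (auto simp: perturb_def)
  moreover have "f x \<noteq> 0" using \<open>g x \<noteq> 0\<close> same_support by blast
  ultimately show "p = q" using \<open>p = (t, x)\<close> \<open>q = (s, y)\<close> by auto
qed

text \<open>At a point \<open>x\<close> of the support, perturbation rescales time by \<open>g x / f x\<close>, which
  multiplies the Lebesgue measure of the fibre by \<open>f x / g x\<close> and turns the density \<open>g\<close>
  into \<open>f\<close>.\<close>
lemma emeasure_pair_Q_perturb_vimage:
  assumes B: "B \<in> sets borel"
  shows "emeasure (lebesgue_pos \<Otimes>\<^sub>M Q) (perturb g f -` B \<inter> UNIV \<times> {x. g x \<noteq> 0})
       = emeasure (lebesgue_pos \<Otimes>\<^sub>M P) B"
proof -
  interpret PQ: pair_sigma_finite lebesgue_pos Q by (rule pair_sigma_finite_Q)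
  interpret PP: pair_sigma_finite lebesgue_pos P by (rule pair_sigma_finite_P)
  define C where "C = perturb g f -` B \<inter> UNIV \<times> {x. g x \<noteq> 0}"
  have C: "C \<in> sets borel" unfolding C_def using B by (rule vimage_perturb_borel)
  have fibre: "ennreal (g y) * emeasure lebesgue_pos ((\<lambda>x. (x, y)) -` C)
      = ennreal (f y) * emeasure lebesgue_pos ((\<lambda>x. (x, y)) -` B)" for y
  proof (cases "g y = 0")
    case True
    then have "f y = 0" using same_support by auto
    then show ?thesis using True by simp
  next
    case False
    have "f y \<noteq> 0" using False same_support by blast
    then have "f y > 0" "g y > 0" using False f_nonneg[of y] g_nonneg[of y] by auto
    define r where "r = g y / f y"
    have "r > 0" using \<open>f y > 0\<close> \<open>g y > 0\<close> by (simp add: r_def)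
    have "(\<lambda>x::real. (x, y)) \<in> borel \<rightarrow>\<^sub>M (borel :: (real \<times> 'a) measure)" by measurable
    from measurable_sets[OF this B] have "(\<lambda>x. (x, y)) -` B \<in> sets borel" by simp
    moreover have "(\<lambda>x. (x, y)) -` C = (\<lambda>t. r * t) -` ((\<lambda>x. (x, y)) -` B)"
      using False unfolding C_def perturb_def r_def by (auto simp: field_simps)
    ultimately have "emeasure lebesgue_pos ((\<lambda>x. (x, y)) -` C)
        = ennreal (inverse r) * emeasure lebesgue_pos ((\<lambda>x. (x, y)) -` B)"
      using emeasure_lebesgue_pos_vimage_scale[OF \<open>r > 0\<close>] by simp
    moreover have "ennreal (g y) * ennreal (inverse r) = ennreal (f y)"
      using \<open>f y > 0\<close> \<open>g y > 0\<close> by (simp add: r_def ennreal_mult[symmetric])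
    ultimately show ?thesis by (simp add: mult.assoc[symmetric])
  qed
  have "emeasure (lebesgue_pos \<Otimes>\<^sub>M Q) C = (\<integral>\<^sup>+y. emeasure lebesgue_pos ((\<lambda>x. (x, y)) -` C) \<partial>Q)"
    using C sets_pair_Q by (intro PQ.emeasure_pair_measure_alt2) simp
  also have "\<dots> = (\<integral>\<^sup>+y. ennreal (g y) * emeasure lebesgue_pos ((\<lambda>x. (x, y)) -` C) \<partial>\<mu>)"
    using PQ.measurable_emeasure_Pair2[of C] C sets_pair_Q
    by (intro nn_integral_density) (auto simp: measurable_cong_sets[OF sets_\<mu> refl] intro: g_measurable)
  also have "\<dots> = (\<integral>\<^sup>+y. ennreal (f y) * emeasure lebesgue_pos ((\<lambda>x. (x, y)) -` B) \<partial>\<mu>)"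
    using fibre by simp
  also have "\<dots> = (\<integral>\<^sup>+y. emeasure lebesgue_pos ((\<lambda>x. (x, y)) -` B) \<partial>P)"
    using PP.measurable_emeasure_Pair2[of B] B sets_pair_P
    by (intro nn_integral_density[symmetric]) (auto simp: measurable_cong_sets[OF sets_\<mu> refl] intro: f_measurable)
  also have "\<dots> = emeasure (lebesgue_pos \<Otimes>\<^sub>M P) B"
    using B sets_pair_P by (intro PP.emeasure_pair_measure_alt2[symmetric]) simp
  finally show ?thesis unfolding C_def .
qed

text \<open>Off the support \<open>f x = g x = 0\<close>, and since \<open>t * 0 / 0 = 0\<close> every point \<open>(t, x)\<close>
  is sent to \<open>(0, x)\<close>. Counting these images through distinct second coordinates keeps the
  counts of the perturbed set measurable everywhere, not only almost everywhere.\<close>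
lemma npts_perturb_image_Int:
  "npts (perturb g f ` S \<inter> B) = npts (S \<inter> (perturb g f -` B \<inter> UNIV \<times> {x. g x \<noteq> 0}))
     + npts (snd ` (S \<inter> (UNIV \<times> {x. g x = 0 \<and> (0, x) \<in> B})))"
proof -
  let ?C = "perturb g f -` B \<inter> UNIV \<times> {x. g x \<noteq> 0}" and ?Z = "{x. g x = 0 \<and> (0, x) \<in> B}"
  have off_support: "perturb g f (t, x) = (0, x)" if "g x = 0" for t x
    using that same_support by (auto simp: perturb_def)
  have split: "perturb g f ` S \<inter> B = perturb g f ` (S \<inter> ?C) \<union> Pair 0 ` snd ` (S \<inter> (UNIV \<times> ?Z))"
  proof (intro equalityI subsetI)
    fix z assume "z \<in> perturb g f ` S \<inter> B"
    then obtain t x where tx: "(t, x) \<in> S" "z = perturb g f (t, x)" "z \<in> B" by auto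
    show "z \<in> perturb g f ` (S \<inter> ?C) \<union> Pair 0 ` snd ` (S \<inter> (UNIV \<times> ?Z))"
    proof (cases "g x = 0")
      case True
      then have "x \<in> snd ` (S \<inter> (UNIV \<times> ?Z))"
        using tx by (auto simp: off_support intro!: image_eqI[of x snd "(t, x)"])
      then show ?thesis using tx True by (simp add: off_support)
    next
      case False
      then show ?thesis using tx by auto
    qed
  next
    fix z assume "z \<in> perturb g f ` (S \<inter> ?C) \<union> Pair 0 ` snd ` (S \<inter> (UNIV \<times> ?Z))"
    then show "z \<in> perturb g f ` S \<inter> B"
    proof
      assume "z \<in> Pair 0 ` snd ` (S \<inter> (UNIV \<times> ?Z))"
      then obtain t x where "(t, x) \<in> S" "g x = 0" "(0, x) \<in> B" "z = (0, x)" by auto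
      then show ?thesis by (metis IntI image_eqI off_support)
    qed auto
  qed
  have "perturb g f ` (S \<inter> ?C) \<inter> Pair 0 ` snd ` (S \<inter> (UNIV \<times> ?Z)) = {}"
    by (auto simp: perturb_def)
  then have "npts (perturb g f ` S \<inter> B)
      = npts (perturb g f ` (S \<inter> ?C)) + npts (Pair (0::real) ` snd ` (S \<inter> (UNIV \<times> ?Z)))"
    unfolding split npts_def by (intro plus_emeasure[symmetric]) auto
  also have "npts (perturb g f ` (S \<inter> ?C)) = npts (S \<inter> ?C)"
    by (rule npts_image, rule inj_on_subset[OF inj_on_perturb]) auto
  also have "npts (Pair (0::real) ` snd ` (S \<inter> (UNIV \<times> ?Z))) = npts (snd ` (S \<inter> (UNIV \<times> ?Z)))"
    by (rule npts_image) (auto simp: inj_on_def)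
  finally show ?thesis .
qed

lemma borel_measurable_npts_perturb_image:
  assumes counts: "\<And>B. B \<in> sets borel \<Longrightarrow> (\<lambda>\<omega>. npts (R \<omega> \<inter> B)) \<in> borel_measurable M"
    and B: "B \<in> sets borel"
  shows "(\<lambda>\<omega>. npts (perturb g f ` R \<omega> \<inter> B)) \<in> borel_measurable M"
proof -
  have "perturb g f -` B \<inter> UNIV \<times> {x. g x \<noteq> 0} \<in> sets borel"
    using B by (rule vimage_perturb_borel)
  moreover have "{x. g x = 0 \<and> (0::real, x) \<in> B} \<in> sets borel"
  proof -
    have "Pair (0::real) \<in> (borel :: 'a measure) \<rightarrow>\<^sub>M borel" by measurable
    from measurable_sets[OF this B] show ?thesis by (simp add: Collect_conj_eq vimage_def)
  qed
  ultimately show ?thesis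
    unfolding npts_perturb_image_Int
    by (intro borel_measurable_add counts borel_measurable_npts_snd_image)
qed

lemma AE_poisson_process_support:
  assumes "prob_space M" and "poisson_process M R (lebesgue_pos \<Otimes>\<^sub>M Q)"
  shows "AE \<omega> in M. R \<omega> \<subseteq> UNIV \<times> {x. g x \<noteq> 0}"
proof -
  interpret PQ: pair_sigma_finite lebesgue_pos Q by (rule pair_sigma_finite_Q)
  have "{x. g x = 0} \<in> sets borel" by measurable
  then have "emeasure (lebesgue_pos \<Otimes>\<^sub>M Q) (UNIV \<times> {x. g x = 0}) = 0"
    using emeasure_Q_zeros by (subst PQ.M2.emeasure_pair_measure_Times) (auto simp: sets_\<mu>)
  moreover have "UNIV \<times> {x. g x = 0} \<in> sets borel" by (intro borel_Times) auto
  ultimately have "AE \<omega> in M. R \<omega> \<inter> UNIV \<times> {x. g x = 0} = {}"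
    by (rule AE_poisson_process_disjoint_null[OF assms, rotated])
  then show ?thesis by eventually_elim auto
qed

lemma poisson_process_perturb:
  assumes "prob_space M" and R: "poisson_process M R (lebesgue_pos \<Otimes>\<^sub>M Q)"
  shows "poisson_process M (\<lambda>\<omega>. perturb g f ` R \<omega>) (lebesgue_pos \<Otimes>\<^sub>M P)"
proof (rule poisson_process_image[OF assms(1) R perturb_borel support_borel inj_on_perturb
      AE_poisson_process_support[OF assms]])
  fix B :: "(real \<times> 'a) set" assume "B \<in> sets borel"
  then show "(\<lambda>\<omega>. npts (perturb g f ` R \<omega> \<inter> B)) \<in> borel_measurable M"
    by (intro borel_measurable_npts_perturb_image poisson_process_count_measurable[OF R])
qed (rule emeasure_pair_Q_perturb_vimage)

lemma AE_perturb_image_positive: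
  assumes "prob_space M" and R: "poisson_process M R (lebesgue_pos \<Otimes>\<^sub>M Q)"
    and "AE \<omega> in M. R \<omega> \<subseteq> {0<..} \<times> UNIV"
  shows "AE \<omega> in M. perturb g f ` R \<omega> \<subseteq> {0<..} \<times> UNIV"
  using assms(3) AE_poisson_process_support[OF assms(1) R]
proof eventually_elim
  case (elim \<omega>)
  show ?case
  proof
    fix p assume "p \<in> perturb g f ` R \<omega>"
    then obtain t x where "(t, x) \<in> R \<omega>" and p: "p = perturb g f (t, x)" by auto
    then have "0 < t" "g x \<noteq> 0" using elim by auto
    moreover have "f x \<noteq> 0" using \<open>g x \<noteq> 0\<close> same_support by blast
    ultimately have "0 < t" "0 < f x" "0 < g x" using f_nonneg[of x] g_nonneg[of x] by auto
    then show "p \<in> {0<..} \<times> UNIV" by (simp add: p perturb_def)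
  qed
qed

end

theorem lemma5:
  fixes M :: "'w measure"
    and R :: "'w \<Rightarrow> (real \<times> 'a::euclidean_space) set"
    and \<mu> :: "'a measure"
    and f g :: "'a \<Rightarrow> real"
    and Mc :: real
  assumes "prob_space M"
    and "sets \<mu> = sets borel"
    and "f \<in> borel_measurable \<mu>" and "g \<in> borel_measurable \<mu>"
    and "\<And>x. f x \<ge> 0" and "\<And>x. g x \<ge> 0"
    and "emeasure (density \<mu> (\<lambda>x. ennreal (g x))) UNIV < \<infinity>"
    and "emeasure (density \<mu> (\<lambda>x. ennreal (g x))) UNIV \<noteq> 0"
    and "emeasure (density \<mu> (\<lambda>x. ennreal (f x))) UNIV < \<infinity>"
    and "emeasure (density \<mu> (\<lambda>x. ennreal (f x))) UNIV \<noteq> 0"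
    and "{x. f x \<noteq> 0} = {x. g x \<noteq> 0}"
    and "\<And>x. g x \<noteq> 0 \<Longrightarrow> f x / g x \<le> Mc"
    and "exp_race M R (density \<mu> (\<lambda>x. ennreal (g x)))"
  shows "exp_race M (\<lambda>\<omega>. perturb g f ` R \<omega>) (density \<mu> (\<lambda>x. ennreal (f x)))"
proof -
  interpret race_perturbation \<mu> f g
    using assms(2-7,9,11) by unfold_locales
  have R: "poisson_process M R (lebesgue_pos \<Otimes>\<^sub>M Q)"
    and R_positive: "AE \<omega> in M. R \<omega> \<subseteq> {0<..} \<times> UNIV"
    using \<open>exp_race M R Q\<close> unfolding exp_race_def by auto
  have R': "poisson_process M (\<lambda>\<omega>. perturb g f ` R \<omega>) (lebesgue_pos \<Otimes>\<^sub>M P)"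
    using \<open>prob_space M\<close> R by (rule poisson_process_perturb)
  have "AE \<omega> in M. perturb g f ` R \<omega> \<subseteq> {0<..} \<times> UNIV"
    using \<open>prob_space M\<close> R R_positive by (rule AE_perturb_image_positive)
  moreover from this have
    "AE \<omega> in M. \<forall>p\<in>perturb g f ` R \<omega>. \<forall>q\<in>perturb g f ` R \<omega>. fst p = fst q \<longrightarrow> p = q"
    using \<open>prob_space M\<close> R' sets_P finite_P by (intro poisson_process_AE_distinct_times)
  ultimately show ?thesis
    unfolding exp_race_def using R' by (simp add: AE_conj_iff)
qed

end
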